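(* Let $\mathcal{G}$ be the complete digraph on $n\ge 3$ nodes (all ordered pairs including self-loops are edges) and let $\tau\in\{1,\dots,n-1\}$. Let $\mathbb{V}=\max_P\min_{i,j}\mathbb{P}(T_{ij}(P)\le\tau)$, the maximum over all row-stochastic nonnegative $P\in\mathbb{R}^{n\times n}$. Then the random walk strategy $P=\frac1n\mathbb{1}_n\mathbb{1}_n^\top$ satisfies $$\min_{i,j}\mathbb{P}(T_{ij}(P)\le\tau)\ \ge\ \frac{n^\tau-(n-1)^\tau}{\tau n^{\tau-1}}\,\mathbb{V},\qquad\text{and}\qquad \frac{n^\tau-(n-1)^\tau}{\tau n^{\tau-1}}\ge 1-\frac1e,$$ where $e$ is Euler's number.
   Context: For a Markov chain $(X_k)_{k\ge0}$ with transition matrix $P$, $T_{ij}=\min\{k\ge1: X_k=j\}$ given $X_0=i$. "Performance within a factor $f$ of optimality" means the strategy's value is at least $f$ times the optimal value $\mathbb{V}$. *)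

theory Defs
  imports Complex_Main "HOL-Library.FuncSet"
begin

definition row_stochastic :: "nat \<Rightarrow> (nat \<Rightarrow> nat \<Rightarrow> real) \<Rightarrow> bool" where
  "row_stochastic n P \<longleftrightarrow>
     (\<forall>a<n. \<forall>b<n. 0 \<le> P a b) \<and> (\<forall>a<n. (\<Sum>b<n. P a b) = 1)"

text \<open>Probability P(T_ij <= tau) for the chain with transition matrix P started at i:
  sum over all trajectories X_1..X_tau (with X_0 = i) that visit j at some time k in 1..tau
  of the product of transition probabilities.\<close>
definition hit_prob :: "nat \<Rightarrow> (nat \<Rightarrow> nat \<Rightarrow> real) \<Rightarrow> nat \<Rightarrow> nat \<Rightarrow> nat \<Rightarrow> real" where
  "hit_prob n P \<tau> i j =
     (\<Sum>x \<in> {x \<in> Pi\<^sub>E {1..\<tau>} (\<lambda>_. {..<n}). \<exists>k\<in>{1..\<tau>}. x k = j}.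
        \<Prod>k\<in>{1..\<tau>}. P ((x(0 := i)) (k - 1)) ((x(0 := i)) k))"

definition perf :: "nat \<Rightarrow> (nat \<Rightarrow> nat \<Rightarrow> real) \<Rightarrow> nat \<Rightarrow> real" where
  "perf n P \<tau> = Min {hit_prob n P \<tau> i j | i j. i < n \<and> j < n}"

text \<open>Optimal value V (the maximum is attained; we write it as a supremum).\<close>
definition opt_val :: "nat \<Rightarrow> nat \<Rightarrow> real" where
  "opt_val n \<tau> = Sup {perf n P \<tau> | P. row_stochastic n P}"

end

theory Submission
  imports Defs "HOL-Analysis.Convex"
begin

text \<open>Started at \<open>i\<close>, a trajectory of length \<open>\<tau>\<close> visits at most \<open>\<tau>\<close> distinct states, so
  \<open>\<Sum>\<^sub>j P(T\<^sub>i\<^sub>j \<le> \<tau>) \<le> \<tau>\<close> for every transition matrix and hence \<open>\<bbbV> \<le> \<tau>/n\<close>. The random walk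
  hits every target with probability \<open>1 - (1 - 1/n)\<^sup>\<tau>\<close>, and with \<open>x = \<tau>/n \<in> (0,1]\<close> the ratio
  of the two is \<open>(1 - (1 - 1/n)\<^sup>\<tau>)/x \<ge> (1 - exp (-x))/x \<ge> 1 - 1/e\<close>, the last step by
  convexity of \<open>exp\<close> on \<open>[-1,0]\<close>.\<close>

definition path_weight :: "(nat \<Rightarrow> nat \<Rightarrow> real) \<Rightarrow> nat \<Rightarrow> nat \<Rightarrow> (nat \<Rightarrow> nat) \<Rightarrow> real" where
  "path_weight P t i x = (\<Prod>k\<in>{1..t}. P ((x(0 := i)) (k - 1)) ((x(0 := i)) k))"

lemma hit_prob_eq_sum_path_weight:
  "hit_prob n P t i j =
     (\<Sum>x \<in> {x \<in> Pi\<^sub>E {1..t} (\<lambda>_. {..<n}). \<exists>k\<in>{1..t}. x k = j}. path_weight P t i x)"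
  by (simp add: hit_prob_def path_weight_def)

lemma trajectory_state_less:
  fixes n t k :: nat
  assumes "i < n" and "x \<in> Pi\<^sub>E {1..t} (\<lambda>_. {..<n})" and "k \<le> t"
  shows "(x(0 := i)) k < n"
proof (cases "k = 0")
  case False
  then have "k \<in> {1..t}" using assms(3) by simp
  then show ?thesis using assms(2) by (auto simp: PiE_iff)
qed (use assms(1) in simp)

lemma path_weight_nonneg:
  assumes "row_stochastic n P" and "i < n" and "x \<in> Pi\<^sub>E {1..t} (\<lambda>_. {..<n})"
  shows "0 \<le> path_weight P t i x"
  unfolding path_weight_def
proof (rule prod_nonneg)
  fix k assume k: "k \<in> {1..t}"
  have "(x(0 := i)) (k - 1) < n" using k by (intro trajectory_state_less[OF assms(2,3)]) auto
  moreover have "(x(0 := i)) k < n" using k by (intro trajectory_state_less[OF assms(2,3)]) simp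
  ultimately show "0 \<le> P ((x(0 := i)) (k - 1)) ((x(0 := i)) k)"
    using assms(1) unfolding row_stochastic_def by blast
qed

lemma path_weight_extend:
  "path_weight P (Suc t) i (x(Suc t := y)) = path_weight P t i x * P ((x(0 := i)) t) y"
proof -
  have "path_weight P t i (x(Suc t := y)) = path_weight P t i x"
    unfolding path_weight_def by (rule prod.cong) auto
  moreover have "{1..Suc t} = insert (Suc t) {1..t}" by auto
  ultimately show ?thesis
    unfolding path_weight_def by (simp add: mult.commute)
qed

lemma sum_path_weight_eq_1:
  assumes rs: "row_stochastic n P" and i: "i < n"
  shows "(\<Sum>x \<in> Pi\<^sub>E {1..t} (\<lambda>_. {..<n}). path_weight P t i x) = 1"
proof (induction t)
  case 0
  then show ?case by (simp add: path_weight_def)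
next
  case (Suc t)
  let ?T = "Pi\<^sub>E {1..t} (\<lambda>_::nat. {..<n})"
  let ?extend = "\<lambda>(y, x). x(Suc t := y)"
  have "Pi\<^sub>E (insert (Suc t) {1..t}) (\<lambda>_. {..<n}) = ?extend ` ({..<n} \<times> ?T)"
    by (rule PiE_insert_eq)
  moreover have "{1..Suc t} = insert (Suc t) {1..t}" by auto
  ultimately have split: "Pi\<^sub>E {1..Suc t} (\<lambda>_. {..<n}) = ?extend ` ({..<n} \<times> ?T)"
    by simp
  have inj: "inj_on ?extend ({..<n} \<times> ?T)"
    by (rule inj_combinator) auto
  have row_sum: "(\<Sum>y<n. P ((x(0 := i)) t) y) = 1" if "x \<in> ?T" for x
    using rs trajectory_state_less[OF i that, of t] unfolding row_stochastic_def by blast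
  have "(\<Sum>x \<in> Pi\<^sub>E {1..Suc t} (\<lambda>_. {..<n}). path_weight P (Suc t) i x)
      = (\<Sum>(y, x) \<in> {..<n} \<times> ?T. path_weight P (Suc t) i (x(Suc t := y)))"
    unfolding split by (subst sum.reindex[OF inj]) (simp add: case_prod_unfold)
  also have "\<dots> = (\<Sum>y<n. \<Sum>x\<in>?T. path_weight P t i x * P ((x(0 := i)) t) y)"
    by (simp add: sum.cartesian_product path_weight_extend)
  also have "\<dots> = (\<Sum>x\<in>?T. path_weight P t i x * (\<Sum>y<n. P ((x(0 := i)) t) y))"
    by (subst sum.swap) (simp add: sum_distrib_left)
  also have "\<dots> = (\<Sum>x\<in>?T. path_weight P t i x)"
    by (intro sum.cong refl) (simp only: row_sum mult_1_right)
  finally show ?case using Suc by simp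
qed

lemma sum_hit_prob_le:
  assumes rs: "row_stochastic n P" and i: "i < n"
  shows "(\<Sum>j<n. hit_prob n P t i j) \<le> real t"
proof -
  let ?T = "Pi\<^sub>E {1..t} (\<lambda>_::nat. {..<n})"
  let ?visited = "\<lambda>x. {j\<in>{..<n}. \<exists>k\<in>{1..t}. x k = j}"
  have fin: "finite ?T" by (rule finite_PiE) auto
  have visited_card: "card (?visited x) \<le> t" for x
  proof -
    have "card (?visited x) \<le> card (x ` {1..t})" by (rule card_mono) auto
    also have "\<dots> \<le> t" using card_image_le[of "{1..t}" x] by simp
    finally show ?thesis .
  qed
  have "(\<Sum>j<n. hit_prob n P t i j)
      = (\<Sum>j<n. \<Sum>x\<in>?T. if \<exists>k\<in>{1..t}. x k = j then path_weight P t i x else 0)"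
    unfolding hit_prob_eq_sum_path_weight by (intro sum.cong refl sum.inter_filter[OF fin])
  also have "\<dots> = (\<Sum>x\<in>?T. real (card (?visited x)) * path_weight P t i x)"
    by (subst sum.swap) (simp add: sum.inter_filter[symmetric])
  also have "\<dots> \<le> (\<Sum>x\<in>?T. real t * path_weight P t i x)"
    using visited_card path_weight_nonneg[OF rs i] by (intro sum_mono mult_right_mono) auto
  also have "\<dots> = real t"
    using sum_path_weight_eq_1[OF rs i] by (simp add: sum_distrib_left[symmetric])
  finally show ?thesis .
qed

lemma perf_le_hit_prob:
  assumes "i < n" and "j < n"
  shows "perf n P t \<le> hit_prob n P t i j"
proof -
  have "{hit_prob n P t i j | i j. i < n \<and> j < n} = (\<lambda>(i, j). hit_prob n P t i j) ` ({..<n} \<times> {..<n})"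
    by auto
  then have "finite {hit_prob n P t i j | i j. i < n \<and> j < n}" by simp
  then show ?thesis unfolding perf_def by (rule Min_le) (use assms in blast)
qed

lemma perf_le:
  assumes rs: "row_stochastic n P" and n: "0 < n"
  shows "perf n P t \<le> real t / real n"
proof -
  have "real n * perf n P t \<le> (\<Sum>j<n. hit_prob n P t 0 j)"
    using sum_bounded_below[of "{..<n}" "perf n P t"] perf_le_hit_prob[OF n] by simp
  also have "\<dots> \<le> real t" by (rule sum_hit_prob_le[OF rs n])
  finally show ?thesis using n by (simp add: field_simps)
qed

lemma row_stochastic_uniform: "0 < n \<Longrightarrow> row_stochastic n (\<lambda>a b. 1 / real n)"
  unfolding row_stochastic_def by simp

lemma opt_val_le:
  assumes "0 < n"
  shows "opt_val n t \<le> real t / real n"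
  unfolding opt_val_def
  using row_stochastic_uniform[OF assms] perf_le[OF _ assms] by (intro cSup_least) auto

lemma hit_prob_uniform:
  assumes j: "j < n"
  shows "hit_prob n (\<lambda>a b. 1 / real n) t i j = (real n ^ t - (real n - 1) ^ t) / real n ^ t"
proof -
  let ?T = "Pi\<^sub>E {1..t} (\<lambda>_::nat. {..<n})"
  let ?hit = "{x \<in> ?T. \<exists>k\<in>{1..t}. x k = j}"
  have fin: "finite ?hit" by (rule finite_subset[where B = ?T]) (auto intro: finite_PiE)
  have "?T - ?hit = Pi\<^sub>E {1..t} (\<lambda>_. {..<n} - {j})"
    by (auto simp: PiE_def Pi_def)
  then have "card (?T - ?hit) = (n - 1) ^ t"
    using j by (simp add: card_PiE)
  moreover have "card (?T - ?hit) = card ?T - card ?hit"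
    by (rule card_Diff_subset[OF fin]) auto
  moreover have "card ?hit \<le> card ?T"
    by (rule card_mono) (auto intro: finite_PiE)
  moreover have "card ?T = n ^ t" by (simp add: card_PiE)
  ultimately have "card ?hit = n ^ t - (n - 1) ^ t" by linarith
  moreover have "(n - 1) ^ t \<le> n ^ t" by (rule power_mono) auto
  moreover have "1 \<le> n" using j by simp
  ultimately have "real (card ?hit) = real n ^ t - (real n - 1) ^ t"
    by (simp add: of_nat_diff)
  then show ?thesis
    unfolding hit_prob_def by (simp add: power_divide)
qed

lemma perf_uniform:
  assumes "0 < n"
  shows "perf n (\<lambda>a b. 1 / real n) t = (real n ^ t - (real n - 1) ^ t) / real n ^ t"
proof -
  have "{hit_prob n (\<lambda>a b. 1 / real n) t i j | i j. i < n \<and> j < n}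
      = {(real n ^ t - (real n - 1) ^ t) / real n ^ t}"
    using assms by (auto simp: hit_prob_uniform intro!: exI[of _ 0])
  then show ?thesis unfolding perf_def by simp
qed

lemma exp_neg_le_chord:
  fixes x :: real
  assumes "0 \<le> x" and "x \<le> 1"
  shows "exp (- x) \<le> 1 - x + x * exp (-1)"
proof -
  have "exp ((1 - x) *\<^sub>R 0 + x *\<^sub>R (-1)) \<le> (1 - x) * exp 0 + x * exp (-1)"
    by (rule convex_onD[OF exp_convex]) (use assms in auto)
  then show ?thesis by simp
qed

lemma power_diff_div_power_ge:
  fixes n t :: nat
  assumes "0 < t" and "t \<le> n"
  shows "(real n ^ t - (real n - 1) ^ t) / real n ^ t \<ge> (1 - 1 / exp 1) * (real t / real n)"
proof -
  define x where "x = real t / real n"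
  have x: "0 \<le> x" "x \<le> 1" using assms unfolding x_def by auto
  have "1 - 1 / real n = (real n - 1) / real n" using assms by (simp add: field_simps)
  then have "(real n - 1) ^ t / real n ^ t = (1 - 1 / real n) ^ t" by (simp add: power_divide)
  also have "\<dots> \<le> exp (- 1 / real n) ^ t"
    using exp_ge_add_one_self[of "- 1 / real n"] assms by (intro power_mono) auto
  also have "\<dots> = exp (- x)" unfolding x_def by (simp add: exp_of_nat_mult[symmetric])
  also have "\<dots> \<le> 1 - x + x * exp (-1)" by (rule exp_neg_le_chord[OF x])
  finally have "x * (1 - exp (-1)) \<le> 1 - (real n - 1) ^ t / real n ^ t"
    by (simp add: algebra_simps)
  then show ?thesis
    using assms unfolding x_def by (simp add: exp_minus inverse_eq_divide mult.commute diff_divide_distrib)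
qed

theorem lemma2:
  fixes n \<tau> :: nat
  assumes "n \<ge> 3" and "1 \<le> \<tau>" and "\<tau> \<le> n - 1"
  shows "perf n (\<lambda>a b. 1 / real n) \<tau>
           \<ge> ((real n ^ \<tau> - (real n - 1) ^ \<tau>) / (real \<tau> * real n ^ (\<tau> - 1))) * opt_val n \<tau>
       \<and> (real n ^ \<tau> - (real n - 1) ^ \<tau>) / (real \<tau> * real n ^ (\<tau> - 1)) \<ge> 1 - 1 / exp 1"
proof
  let ?ratio = "(real n ^ \<tau> - (real n - 1) ^ \<tau>) / (real \<tau> * real n ^ (\<tau> - 1))"
  have n: "0 < n" and \<tau>: "0 < \<tau>" "\<tau> \<le> n" using assms by auto
  have "real n ^ \<tau> = real n * real n ^ (\<tau> - 1)" using \<tau> by (simp add: power_eq_if)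
  then have ratio: "?ratio * (real \<tau> / real n) = perf n (\<lambda>a b. 1 / real n) \<tau>"
    unfolding perf_uniform[OF n] using n \<tau> by (simp add: field_simps)
  have "(real n - 1) ^ \<tau> \<le> real n ^ \<tau>" by (rule power_mono) (use n in auto)
  then have "?ratio * opt_val n \<tau> \<le> ?ratio * (real \<tau> / real n)"
    by (intro mult_left_mono opt_val_le[OF n]) simp
  then show "perf n (\<lambda>a b. 1 / real n) \<tau> \<ge> ?ratio * opt_val n \<tau>"
    unfolding ratio .
  have "(1 - 1 / exp 1) * (real \<tau> / real n) \<le> ?ratio * (real \<tau> / real n)"
    unfolding ratio perf_uniform[OF n] by (rule power_diff_div_power_ge[OF \<tau>])
  then show "?ratio \<ge> 1 - 1 / exp 1"
    by (rule mult_right_le_imp_le) (use n \<tau> in simp)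
qed

end
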